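(* If $w\in L^2$ and $u=Hw$, then $u\in C^{1/2}[0,\pi/2]$, $u(0)=u(\pi/2)=0$, and for all $\sigma,s\in[0,\pi/2]$: $$|u(\sigma)-u(s)|\leqslant\|w\|\,|\sigma-s|^{1/2},\qquad |u(\sigma)|\leqslant\|w\|\,\sigma^{1/2},\qquad |u(\sigma)|\leqslant\|w\|\,|\pi/2-\sigma|^{1/2}.$$
   Context: $L^2$ denotes $L^2(0,\pi/2)$ with norm $\|f\|=\big(\int_0^{\pi/2}|f(\sigma)|^2\,d\sigma\big)^{1/2}$. The kernel is $K(s,\sigma)=\log\Big|\frac{\sin(s+\sigma)}{\sin(s-\sigma)}\Big|$ for $s,\sigma\in(0,\pi/2)$, $s\neq\sigma$, and for $w\in L^2$ the operator $H$ is $(Hw)(\sigma)=\frac1\pi\int_0^{\pi/2}K(s,\sigma)\,w(s)\,ds$, $\sigma\in[0,\pi/2]$. $C^{1/2}[0,\pi/2]$ is the space of Hölder continuous functions with exponent $1/2$. *)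

theory Defs
  imports "HOL-Analysis.Analysis"
begin

definition in_L2 :: "(real \<Rightarrow> real) \<Rightarrow> bool" where
  "in_L2 w \<longleftrightarrow> set_borel_measurable lborel {0..pi/2} w
      \<and> set_integrable lborel {0..pi/2} (\<lambda>s. (w s)\<^sup>2)"

definition L2_norm :: "(real \<Rightarrow> real) \<Rightarrow> real" where
  "L2_norm w = sqrt (LINT s:{0..pi/2}|lborel. (w s)\<^sup>2)"

text \<open>The kernel; its value on the diagonal s = sigma (a null set) is irrelevant, set to 0.\<close>
definition K :: "real \<Rightarrow> real \<Rightarrow> real" where
  "K s \<sigma> = (if s = \<sigma> then 0 else ln \<bar>sin (s + \<sigma>) / sin (s - \<sigma>)\<bar>)"

definition H :: "(real \<Rightarrow> real) \<Rightarrow> real \<Rightarrow> real" where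
  "H w \<sigma> = (1 / pi) * (LINT s:{0..pi/2}|lborel. K s \<sigma> * w s)"

definition holder_on :: "real set \<Rightarrow> real \<Rightarrow> (real \<Rightarrow> real) \<Rightarrow> bool" where
  "holder_on A \<alpha> f \<longleftrightarrow> (\<exists>C. \<forall>x\<in>A. \<forall>y\<in>A. \<bar>f x - f y\<bar> \<le> C * \<bar>x - y\<bar> powr \<alpha>)"

end

theory Submission
  imports Defs
begin

text \<open>
  For \<open>\<sigma>, t \<in> [0, \<pi>/2]\<close> the function \<open>s \<mapsto> K s \<sigma> - K s t\<close> has the sine series
  \<open>\<Sum>n. (2/n) (sin 2n\<sigma> - sin 2nt) sin 2ns\<close>, obtained by Abel summation from the power series of
  \<open>ln (1 - 2r cos \<theta> + r\<^sup>2)\<close>. By orthogonality of \<open>sin 2ns\<close> on \<open>[0, \<pi>/2]\<close> its squared \<open>L\<^sup>2\<close> norm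
  is \<open>\<pi> \<Sum>n. ((sin 2n\<sigma> - sin 2nt)/n)\<^sup>2\<close>, and Bessel's inequality for the indicator of the
  interval between \<open>t\<close> and \<open>\<sigma>\<close>, expanded in \<open>cos 2nx\<close>, bounds this sum by \<open>\<pi> |\<sigma> - t|\<close>.
  Fatou's lemma carries the bound through both limits (partial sums, then \<open>r \<rightarrow> 1\<close>), so
  \<open>\<parallel>K \<cdot> \<sigma> - K \<cdot> t\<parallel> \<le> \<pi> |\<sigma> - t|^(1/2)\<close>, and Cauchy-Schwarz gives the H\<ouml>lder bound for \<open>u = H w\<close>.
  The kernel vanishes for \<open>\<sigma> = 0\<close> and \<open>\<sigma> = \<pi>/2\<close>, which gives the boundary values and the
  last two bounds.
\<close>

lemma has_integral_cos_mult:
  fixes a b k :: real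
  assumes "a \<le> b"
  shows "((\<lambda>x. cos (k * x)) has_integral (if k = 0 then b - a else (sin (k * b) - sin (k * a)) / k)) {a..b}"
proof (cases "k = 0")
  case True
  then show ?thesis using has_integral_const_real[of "1::real" a b] assms by simp
next
  case False
  have "((\<lambda>x. sin (k * x) / k) has_real_derivative cos (k * x)) (at x within {a..b})" for x
    using False by (auto intro!: derivative_eq_intros)
  then have "((\<lambda>x. cos (k * x)) has_integral (sin (k * b) / k - sin (k * a) / k)) {a..b}"
    by (intro fundamental_theorem_of_calculus)
       (auto simp: assms has_real_derivative_iff_has_vector_derivative[symmetric])
  then show ?thesis using False by (simp add: diff_divide_distrib)
qed

lemma has_integral_cos_int_mult_quarter_period:
  fixes j :: int
  shows "((\<lambda>x. cos (2 * of_int j * x)) has_integral (if j = 0 then pi/2 else 0)) {0..pi/2}"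
proof -
  have "sin (2 * of_int j * (pi/2)) = 0"
    using sin_npi_int[of j] by (simp add: mult.commute)
  then have "(if 2 * of_int j = (0::real) then pi/2 - 0
      else (sin (2 * of_int j * (pi/2)) - sin (2 * of_int j * 0)) / (2 * of_int j))
      = (if j = 0 then pi/2 else 0)"
    by simp
  then show ?thesis
    using has_integral_cos_mult[of 0 "pi/2" "2 * of_int j"] by simp
qed

lemma has_integral_cos_mult_cos:
  fixes n m :: nat
  shows "((\<lambda>x. cos (2 * real n * x) * cos (2 * real m * x)) has_integral
     (if n = m then (if n = 0 then pi/2 else pi/4) else 0)) {0..pi/2}"
proof -
  have prod: "cos (2 * real n * x) * cos (2 * real m * x) =
     cos (2 * of_int (int n - int m) * x) / 2 + cos (2 * of_int (int n + int m) * x) / 2" for x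
    by (simp add: cos_add cos_diff algebra_simps, simp add: field_simps)
  have integral: "((\<lambda>x. cos (2 * of_int (int n - int m) * x) / 2 + cos (2 * of_int (int n + int m) * x) / 2)
      has_integral ((if int n - int m = 0 then pi/2 else 0) / 2 + (if int n + int m = 0 then pi/2 else 0) / 2))
      {0..pi/2}"
    by (intro has_integral_add has_integral_divide has_integral_cos_int_mult_quarter_period)
  have result: "(if int n - int m = 0 then pi/2 else 0) / 2 + (if int n + int m = 0 then pi/2 else 0) / 2
      = (if n = m then (if n = 0 then pi/2 else pi/4) else (0::real))"
    by auto
  show ?thesis unfolding prod using integral unfolding result .
qed

lemma has_integral_sin_mult_sin:
  fixes n m :: nat
  shows "((\<lambda>x. sin (2 * real n * x) * sin (2 * real m * x)) has_integral
     (if n = m then (if n = 0 then 0 else pi/4) else 0)) {0..pi/2}"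
proof -
  have prod: "sin (2 * real n * x) * sin (2 * real m * x) =
     cos (2 * of_int (int n - int m) * x) / 2 - cos (2 * of_int (int n + int m) * x) / 2" for x
    by (simp add: cos_add cos_diff algebra_simps, simp add: field_simps)
  have integral: "((\<lambda>x. cos (2 * of_int (int n - int m) * x) / 2 - cos (2 * of_int (int n + int m) * x) / 2)
      has_integral ((if int n - int m = 0 then pi/2 else 0) / 2 - (if int n + int m = 0 then pi/2 else 0) / 2))
      {0..pi/2}"
    by (intro has_integral_diff has_integral_divide has_integral_cos_int_mult_quarter_period)
  have result: "(if int n - int m = 0 then pi/2 else 0) / 2 - (if int n + int m = 0 then pi/2 else 0) / 2
      = (if n = m then (if n = 0 then 0 else pi/4) else (0::real))"
    by auto
  show ?thesis unfolding prod using integral unfolding result .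
qed

lemma has_integral_square_orthogonal_sum:
  fixes \<phi> :: "'i \<Rightarrow> 'a::euclidean_space \<Rightarrow> real"
  assumes "finite I"
    and orth: "\<And>n m. n \<in> I \<Longrightarrow> m \<in> I \<Longrightarrow>
      ((\<lambda>x. \<phi> n x * \<phi> m x) has_integral (if n = m then c n else 0)) S"
  shows "((\<lambda>x. (\<Sum>n\<in>I. a n * \<phi> n x)\<^sup>2) has_integral (\<Sum>n\<in>I. (a n)\<^sup>2 * c n)) S"
proof -
  have square: "(\<Sum>n\<in>I. a n * \<phi> n x)\<^sup>2 = (\<Sum>n\<in>I. \<Sum>m\<in>I. a n * a m * (\<phi> n x * \<phi> m x))" for x
    unfolding power2_eq_square sum_product by (simp add: algebra_simps)
  have "((\<lambda>x. \<Sum>n\<in>I. \<Sum>m\<in>I. a n * a m * (\<phi> n x * \<phi> m x)) has_integral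
      (\<Sum>n\<in>I. \<Sum>m\<in>I. a n * a m * (if n = m then c n else 0))) S"
    using assms by (intro has_integral_sum has_integral_mult_right) auto
  moreover have "(\<Sum>n\<in>I. \<Sum>m\<in>I. a n * a m * (if n = m then c n else 0)) = (\<Sum>n\<in>I. (a n)\<^sup>2 * c n)"
    using \<open>finite I\<close> by (simp add: if_distrib[where f = "\<lambda>z. _ * z"] power2_eq_square cong: if_cong)
  ultimately show ?thesis unfolding square by simp
qed

text \<open>
  The function \<open>g\<close> below is the projection of the indicator of \<open>[t, \<sigma>]\<close>; the claim comes from
  expanding \<open>0 \<le> \<integral>\<^sub>t\<^sup>\<sigma> (g - 1)\<^sup>2\<close>. No sign condition on \<open>c\<close> is needed: since \<open>x / 0 = 0\<close>,
  indices with \<open>c n = 0\<close> contribute nothing on either side.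
\<close>
lemma bessel_inequality_interval:
  fixes \<phi> :: "'i \<Rightarrow> real \<Rightarrow> real"
  assumes "finite I"
    and cont: "\<And>n. n \<in> I \<Longrightarrow> continuous_on {a..b} (\<phi> n)"
    and orth: "\<And>n m. n \<in> I \<Longrightarrow> m \<in> I \<Longrightarrow>
      ((\<lambda>x. \<phi> n x * \<phi> m x) has_integral (if n = m then c n else 0)) {a..b}"
    and "a \<le> t" "t \<le> \<sigma>" "\<sigma> \<le> b"
  shows "(\<Sum>n\<in>I. (integral {t..\<sigma>} (\<phi> n))\<^sup>2 / c n) \<le> \<sigma> - t"
proof -
  define e where "e n = integral {t..\<sigma>} (\<phi> n)" for n
  define g where "g x = (\<Sum>n\<in>I. e n / c n * \<phi> n x)" for x
  define B where "B = (\<Sum>n\<in>I. (e n)\<^sup>2 / c n)"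
  have sub: "{t..\<sigma>} \<subseteq> {a..b}" using assms by auto
  have g_cont: "continuous_on {a..b} g"
    unfolding g_def using cont by (intro continuous_intros) auto
  have g_sq_int: "(\<lambda>x. (g x)\<^sup>2) integrable_on S" if "S \<subseteq> {a..b}" "S = {u..v}" for S u v
    using that by (auto intro!: integrable_continuous_interval continuous_intros
        continuous_on_subset[OF g_cont])
  have "((\<lambda>x. (g x)\<^sup>2) has_integral (\<Sum>n\<in>I. (e n / c n)\<^sup>2 * c n)) {a..b}"
    unfolding g_def using \<open>finite I\<close> orth by (rule has_integral_square_orthogonal_sum)
  moreover have "(\<Sum>n\<in>I. (e n / c n)\<^sup>2 * c n) = B"
    unfolding B_def by (intro sum.cong) (auto simp: power2_eq_square)
  ultimately have g_sq_total: "integral {a..b} (\<lambda>x. (g x)\<^sup>2) = B"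
    by (simp add: integral_unique)
  have "\<phi> n integrable_on {t..\<sigma>}" if "n \<in> I" for n
    using continuous_on_subset[OF cont[OF that] sub] by (rule integrable_continuous_interval)
  then have "(g has_integral (\<Sum>n\<in>I. e n / c n * e n)) {t..\<sigma>}"
    unfolding g_def e_def using \<open>finite I\<close>
    by (intro has_integral_sum has_integral_mult_right) auto
  moreover have "(\<Sum>n\<in>I. e n / c n * e n) = B"
    unfolding B_def by (intro sum.cong) (auto simp: power2_eq_square)
  ultimately have g_int: "(g has_integral B) {t..\<sigma>}" by simp
  have one_int: "((\<lambda>x. 1) has_integral (\<sigma> - t)) {t..\<sigma>}"
    using has_integral_const_real[of "1::real" t \<sigma>] \<open>t \<le> \<sigma>\<close> by simp
  have "((\<lambda>x. (g x)\<^sup>2 - 2 * g x + 1) has_integral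
      (integral {t..\<sigma>} (\<lambda>x. (g x)\<^sup>2) - 2 * B + (\<sigma> - t))) {t..\<sigma>}"
    using sub by (intro has_integral_add has_integral_diff has_integral_mult_right
        g_int one_int integrable_integral g_sq_int) auto
  then have "0 \<le> integral {t..\<sigma>} (\<lambda>x. (g x)\<^sup>2) - 2 * B + (\<sigma> - t)"
  proof (rule has_integral_nonneg)
    show "0 \<le> (g x)\<^sup>2 - 2 * g x + 1" for x
      using zero_le_power2[of "g x - 1"] by (simp add: power2_diff)
  qed
  moreover have "integral {t..\<sigma>} (\<lambda>x. (g x)\<^sup>2) \<le> integral {a..b} (\<lambda>x. (g x)\<^sup>2)"
    using sub by (intro integral_subset_le g_sq_int) auto
  ultimately show ?thesis
    using g_sq_total unfolding B_def e_def by linarith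
qed

lemma sum_sin_diff_div_square_le_ordered:
  assumes "0 \<le> t" "t \<le> \<sigma>" "\<sigma> \<le> pi/2"
  shows "(\<Sum>n<N. ((sin (2 * real n * \<sigma>) - sin (2 * real n * t)) / real n)\<^sup>2) \<le> pi * (\<sigma> - t)"
proof -
  define c where "c n = (if n = 0 then pi/2 else pi/4)" for n :: nat
  have integral_cos: "integral {t..\<sigma>} (\<lambda>x. cos (2 * real n * x)) =
      (if n = 0 then \<sigma> - t else (sin (2 * real n * \<sigma>) - sin (2 * real n * t)) / (2 * real n))" for n
    using has_integral_cos_mult[OF \<open>t \<le> \<sigma>\<close>, of "2 * real n"] by (simp add: integral_unique)
  have "(\<Sum>n<N. ((sin (2 * real n * \<sigma>) - sin (2 * real n * t)) / real n)\<^sup>2)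
      \<le> (\<Sum>n<N. pi * ((integral {t..\<sigma>} (\<lambda>x. cos (2 * real n * x)))\<^sup>2 / c n))"
  proof (rule sum_mono)
    \<comment> \<open>for \<open>n = 0\<close> the left side is \<open>0 / 0 = 0\<close>\<close>
    fix n :: nat
    show "((sin (2 * real n * \<sigma>) - sin (2 * real n * t)) / real n)\<^sup>2
        \<le> pi * ((integral {t..\<sigma>} (\<lambda>x. cos (2 * real n * x)))\<^sup>2 / c n)"
      unfolding integral_cos c_def by (simp add: power_divide field_simps)
  qed
  also have "\<dots> = pi * (\<Sum>n<N. (integral {t..\<sigma>} (\<lambda>x. cos (2 * real n * x)))\<^sup>2 / c n)"
    by (simp add: sum_distrib_left)
  also have "\<dots> \<le> pi * (\<sigma> - t)"
  proof (intro mult_left_mono bessel_inequality_interval[where a = 0 and b = "pi/2"])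
    show "((\<lambda>x. cos (2 * real n * x) * cos (2 * real m * x)) has_integral
        (if n = m then c n else 0)) {0..pi/2}" for n m
      unfolding c_def by (rule has_integral_cos_mult_cos)
  qed (use assms in \<open>auto intro!: continuous_intros\<close>)
  finally show ?thesis .
qed

lemma sum_sin_diff_div_square_le:
  assumes "\<sigma> \<in> {0..pi/2}" "t \<in> {0..pi/2}"
  shows "(\<Sum>n<N. ((sin (2 * real n * \<sigma>) - sin (2 * real n * t)) / real n)\<^sup>2) \<le> pi * \<bar>\<sigma> - t\<bar>"
proof (cases "t \<le> \<sigma>")
  case True
  then show ?thesis using sum_sin_diff_div_square_le_ordered[of t \<sigma> N] assms by auto
next
  case False
  have "((sin (2 * real n * \<sigma>) - sin (2 * real n * t)) / real n)\<^sup>2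
      = ((sin (2 * real n * t) - sin (2 * real n * \<sigma>)) / real n)\<^sup>2" for n
    by (simp add: power2_commute diff_divide_distrib)
  then show ?thesis using sum_sin_diff_div_square_le_ordered[of \<sigma> t N] assms False by auto
qed

lemma power_cos_div_sums_ln:
  fixes r \<theta> :: real
  assumes "0 \<le> r" "r < 1"
  shows "(\<lambda>n. r^n * cos (real n * \<theta>) / real n) sums (- ln (1 - 2 * r * cos \<theta> + r\<^sup>2) / 2)"
proof -
  define z where "z = - (complex_of_real r * cis \<theta>)"
  have "cmod z < 1" using assms by (simp add: z_def norm_mult)
  from sums_Re[OF Ln_series'[OF this]]
  have series: "(\<lambda>n. Re (- ((- z) ^ n) / of_nat n)) sums Re (Ln (1 + z))" .
  have series_term: "Re (- ((- z) ^ n) / of_nat n) = - (r^n * cos (real n * \<theta>) / real n)" for n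
    by (simp add: z_def power_mult_distrib Re_divide_of_nat cos_n_Re_cis_pow_n)
  have norm_sq: "(cmod (1 + z))\<^sup>2 = 1 - 2 * r * cos \<theta> + r\<^sup>2"
  proof -
    have "r * (r * (cos \<theta> * cos \<theta>)) + r * (r * (sin \<theta> * sin \<theta>)) = r * r * ((sin \<theta>)\<^sup>2 + (cos \<theta>)\<^sup>2)"
      unfolding power2_eq_square by algebra
    then show ?thesis unfolding z_def cmod_power2 by (simp add: power2_eq_square algebra_simps)
  qed
  have "(1 - r)\<^sup>2 \<le> 1 - 2 * r * cos \<theta> + r\<^sup>2"
    using mult_left_le[OF cos_le_one \<open>0 \<le> r\<close>, of \<theta>] by (simp add: power2_eq_square algebra_simps)
  moreover have "0 < (1 - r)\<^sup>2" using \<open>r < 1\<close> by simp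
  ultimately have pos: "0 < 1 - 2 * r * cos \<theta> + r\<^sup>2" by linarith
  then have "1 + z \<noteq> 0" using norm_sq by auto
  then have "Re (Ln (1 + z)) = ln (sqrt ((cmod (1 + z))\<^sup>2))" by simp
  also have "\<dots> = ln (1 - 2 * r * cos \<theta> + r\<^sup>2) / 2" unfolding norm_sq using pos by (simp add: ln_sqrt)
  finally have Re_Ln: "Re (Ln (1 + z)) = ln (1 - 2 * r * cos \<theta> + r\<^sup>2) / 2" .
  from sums_minus[OF series] show ?thesis unfolding series_term Re_Ln by simp
qed

text \<open>The sine series of \<open>K\<close> damped by \<open>r\<^sup>n\<close> (Abel means); it tends to \<open>K\<close> as \<open>r \<rightarrow> 1\<close>.\<close>
definition K_abel :: "real \<Rightarrow> real \<Rightarrow> real \<Rightarrow> real" where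
  "K_abel r s \<sigma> =
    (ln (1 - 2 * r * cos (2 * (s + \<sigma>)) + r\<^sup>2) - ln (1 - 2 * r * cos (2 * (s - \<sigma>)) + r\<^sup>2)) / 2"

lemma K_abel_sums:
  assumes "0 \<le> r" "r < 1"
  shows "(\<lambda>n. 2 * r^n / real n * sin (2 * real n * \<sigma>) * sin (2 * real n * s)) sums K_abel r s \<sigma>"
proof -
  have "(\<lambda>n. r^n * cos (real n * (2 * (s - \<sigma>))) / real n - r^n * cos (real n * (2 * (s + \<sigma>))) / real n)
      sums (- ln (1 - 2 * r * cos (2 * (s - \<sigma>)) + r\<^sup>2) / 2 - - ln (1 - 2 * r * cos (2 * (s + \<sigma>)) + r\<^sup>2) / 2)"
    using assms by (intro sums_diff power_cos_div_sums_ln)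
  moreover have "r^n * cos (real n * (2 * (s - \<sigma>))) / real n - r^n * cos (real n * (2 * (s + \<sigma>))) / real n
      = 2 * r^n / real n * sin (2 * real n * \<sigma>) * sin (2 * real n * s)" for n
  proof -
    have "real n * (2 * (s - \<sigma>)) = 2 * real n * s - 2 * real n * \<sigma>"
      "real n * (2 * (s + \<sigma>)) = 2 * real n * s + 2 * real n * \<sigma>"
      by (simp_all add: algebra_simps)
    then show ?thesis by (simp add: cos_diff cos_add diff_divide_distrib[symmetric] algebra_simps)
  qed
  ultimately show ?thesis unfolding K_abel_def by (simp add: diff_divide_distrib)
qed

lemma K_abel_1_eq_K:
  assumes "sin (s + \<sigma>) \<noteq> 0" "sin (s - \<sigma>) \<noteq> 0"
  shows "K_abel 1 s \<sigma> = K s \<sigma>"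
proof -
  have at_1: "ln (1 - 2 * 1 * cos (2 * x) + 1\<^sup>2) = ln 4 + 2 * ln \<bar>sin x\<bar>" if "sin x \<noteq> 0" for x :: real
  proof -
    have "1 - 2 * 1 * cos (2 * x) + 1\<^sup>2 = 4 * \<bar>sin x\<bar> ^ 2"
      by (simp add: cos_double_sin)
    also have "ln \<dots> = ln 4 + ln (\<bar>sin x\<bar> ^ 2)"
      using that by (simp add: ln_mult)
    also have "ln (\<bar>sin x\<bar> ^ 2) = 2 * ln \<bar>sin x\<bar>"
      using that by (subst ln_realpow) auto
    finally show ?thesis .
  qed
  have "s \<noteq> \<sigma>" using assms(2) by auto
  then show ?thesis
    using assms unfolding K_abel_def at_1[OF assms(1)] at_1[OF assms(2)]
    by (simp add: K_def abs_divide ln_div)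
qed

lemma K_abel_tendsto_K:
  assumes "(r \<longlongrightarrow> 1) F" "sin (s + \<sigma>) \<noteq> 0" "sin (s - \<sigma>) \<noteq> 0"
  shows "((\<lambda>k. K_abel (r k) s \<sigma>) \<longlongrightarrow> K s \<sigma>) F"
proof -
  have "cos (2 * (s + \<sigma>)) \<noteq> 1" "cos (2 * (s - \<sigma>)) \<noteq> 1"
    using assms(2,3) by (simp_all only: cos_double_sin) simp_all
  then have "((\<lambda>k. K_abel (r k) s \<sigma>) \<longlongrightarrow> K_abel 1 s \<sigma>) F"
    unfolding K_abel_def using assms by (intro tendsto_intros tendsto_ln) auto
  then show ?thesis using K_abel_1_eq_K[OF assms(2,3)] by simp
qed

lemma nn_integral_indicator_square_le_of_tendsto:
  fixes f :: "nat \<Rightarrow> 'a \<Rightarrow> real"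
  assumes [measurable]: "\<And>n. f n \<in> borel_measurable M" "A \<in> sets M"
    and lim: "AE x in M. x \<in> A \<longrightarrow> (\<lambda>n. f n x) \<longlonglongrightarrow> g x"
    and bound: "\<And>n. (\<integral>\<^sup>+x. ennreal (indicator A x * (f n x)\<^sup>2) \<partial>M) \<le> B"
  shows "(\<integral>\<^sup>+x. ennreal (indicator A x * (g x)\<^sup>2) \<partial>M) \<le> B"
proof -
  let ?u = "\<lambda>n x. ennreal (indicator A x * (f n x)\<^sup>2)"
  have "AE x in M. ennreal (indicator A x * (g x)\<^sup>2) = liminf (\<lambda>n. ?u n x)"
    using lim
  proof eventually_elim
    case (elim x)
    then have "(\<lambda>n. ?u n x) \<longlonglongrightarrow> ennreal (indicator A x * (g x)\<^sup>2)"
      by (cases "x \<in> A") (auto intro!: tendsto_ennrealI tendsto_intros)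
    then show ?case by (metis lim_imp_Liminf sequentially_bot)
  qed
  then have "(\<integral>\<^sup>+x. ennreal (indicator A x * (g x)\<^sup>2) \<partial>M) = (\<integral>\<^sup>+x. liminf (\<lambda>n. ?u n x) \<partial>M)"
    by (rule nn_integral_cong_AE)
  also have "\<dots> \<le> liminf (\<lambda>n. integral\<^sup>N M (?u n))"
    by (intro nn_integral_liminf) measurable
  also have "\<dots> \<le> B"
    using bound by (intro Liminf_le) (auto intro: always_eventually)
  finally show ?thesis .
qed

lemma K_abel_diff_square_bound:
  assumes "0 \<le> r" "r < 1" and st: "\<sigma> \<in> {0..pi/2}" "t \<in> {0..pi/2}"
  shows "(\<integral>\<^sup>+s. ennreal (indicator {0..pi/2} s * (K_abel r s \<sigma> - K_abel r s t)\<^sup>2) \<partial>lborel)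
    \<le> ennreal (pi\<^sup>2 * \<bar>\<sigma> - t\<bar>)"
proof (rule nn_integral_indicator_square_le_of_tendsto)
  define a where "a n = 2 * r^n / real n * (sin (2 * real n * \<sigma>) - sin (2 * real n * t))" for n
  define S where "S N s = (\<Sum>n<N. a n * sin (2 * real n * s))" for N s
  show "S N \<in> borel_measurable lborel" for N
    unfolding S_def by measurable
  have "(\<lambda>n. a n * sin (2 * real n * s)) sums (K_abel r s \<sigma> - K_abel r s t)" for s
    using sums_diff[OF K_abel_sums[OF assms(1,2), of \<sigma> s] K_abel_sums[OF assms(1,2), of t s]]
    by (simp add: a_def algebra_simps)
  then show "AE s in lborel. s \<in> {0..pi/2} \<longrightarrow> (\<lambda>N. S N s) \<longlonglongrightarrow> K_abel r s \<sigma> - K_abel r s t"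
    by (simp add: S_def sums_def)
  define c where "c n = (if n = 0 then 0 else pi/4)" for n :: nat
  have "((\<lambda>s. (S N s)\<^sup>2) has_integral (\<Sum>n<N. (a n)\<^sup>2 * c n)) {0..pi/2}" for N
    unfolding S_def c_def by (intro has_integral_square_orthogonal_sum has_integral_sin_mult_sin) auto
  then have "(\<integral>\<^sup>+s. ennreal (indicator {0..pi/2} s * (S N s)\<^sup>2) \<partial>lborel) = ennreal (\<Sum>n<N. (a n)\<^sup>2 * c n)" for N
    by (intro nn_integral_has_integral_lebesgue) auto
  moreover have "(\<Sum>n<N. (a n)\<^sup>2 * c n) \<le> pi\<^sup>2 * \<bar>\<sigma> - t\<bar>" for N
  proof -
    have "(\<Sum>n<N. (a n)\<^sup>2 * c n) \<le> (\<Sum>n<N. pi * ((sin (2 * real n * \<sigma>) - sin (2 * real n * t)) / real n)\<^sup>2)"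
    proof (rule sum_mono)
      fix n
      let ?q = "pi * ((sin (2 * real n * \<sigma>) - sin (2 * real n * t)) / real n)\<^sup>2"
      have "(a n)\<^sup>2 * c n = (r^n)\<^sup>2 * ?q"
        by (simp add: a_def c_def power_mult_distrib power_divide)
      also have "\<dots> \<le> 1 * ?q"
        using assms(1,2) by (intro mult_right_mono) (auto simp: power_le_one)
      finally show "(a n)\<^sup>2 * c n \<le> ?q" by simp
    qed
    also have "\<dots> \<le> pi * (pi * \<bar>\<sigma> - t\<bar>)"
      unfolding sum_distrib_left[symmetric] using sum_sin_diff_div_square_le[OF st]
      by (intro mult_left_mono) auto
    finally show ?thesis by (simp add: power2_eq_square)
  qed
  ultimately show "(\<integral>\<^sup>+s. ennreal (indicator {0..pi/2} s * (S N s)\<^sup>2) \<partial>lborel) \<le> ennreal (pi\<^sup>2 * \<bar>\<sigma> - t\<bar>)" for N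
    by (simp add: ennreal_leI)
qed simp

lemma integrable_mult_abs_integral_le_sqrt:
  fixes f g :: "'a \<Rightarrow> real"
  assumes [measurable]: "f \<in> borel_measurable M" "g \<in> borel_measurable M"
    and f_sq: "(\<integral>\<^sup>+x. ennreal ((f x)\<^sup>2) \<partial>M) \<le> ennreal C" and "0 \<le> C"
    and g_sq: "integrable M (\<lambda>x. (g x)\<^sup>2)"
  shows "integrable M (\<lambda>x. f x * g x) \<and> \<bar>\<integral>x. f x * g x \<partial>M\<bar> \<le> sqrt C * sqrt (\<integral>x. (g x)\<^sup>2 \<partial>M)"
proof -
  define I where "I = (\<integral>x. (g x)\<^sup>2 \<partial>M)"
  have "0 \<le> I" unfolding I_def by simp
  let ?P = "\<integral>\<^sup>+x. ennreal \<bar>f x * g x\<bar> \<partial>M"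
  have "?P\<^sup>2 \<le> (\<integral>\<^sup>+x. ennreal \<bar>f x\<bar> ^ 2 \<partial>M) * (\<integral>\<^sup>+x. ennreal \<bar>g x\<bar> ^ 2 \<partial>M)"
    using Cauchy_Schwarz_nn_integral[of "\<lambda>x. ennreal \<bar>f x\<bar>" M "\<lambda>x. ennreal \<bar>g x\<bar>"]
    by (simp add: abs_mult ennreal_mult)
  also have "\<dots> \<le> ennreal C * ennreal I"
    using f_sq g_sq unfolding I_def
    by (intro mult_mono) (simp_all add: ennreal_power nn_integral_eq_integral)
  finally have P_sq: "?P\<^sup>2 \<le> ennreal (C * I)"
    using \<open>0 \<le> C\<close> \<open>0 \<le> I\<close> by (simp add: ennreal_mult)
  then have "?P\<^sup>2 < \<infinity>"
    by (rule le_less_trans) simp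
  then have fg_int: "integrable M (\<lambda>x. f x * g x)"
    by (intro integrableI_bounded) (auto simp: power_less_top_ennreal)
  then have "ennreal ((\<integral>x. \<bar>f x * g x\<bar> \<partial>M)\<^sup>2) = ?P\<^sup>2"
    by (simp add: nn_integral_eq_integral ennreal_power)
  also note P_sq
  finally have "(\<integral>x. \<bar>f x * g x\<bar> \<partial>M)\<^sup>2 \<le> C * I"
    using \<open>0 \<le> C\<close> \<open>0 \<le> I\<close> by (subst (asm) ennreal_le_iff) auto
  then have "\<bar>\<integral>x. f x * g x \<partial>M\<bar> \<le> sqrt (C * I)"
    by (intro order_trans[OF integral_abs_bound] real_le_rsqrt)
  with fg_int show ?thesis by (simp add: I_def real_sqrt_mult)
qed

lemma set_integrable_mult_abs_set_integral_le_sqrt: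
  fixes f w :: "'a \<Rightarrow> real"
  assumes [measurable]: "f \<in> borel_measurable M" "set_borel_measurable M A w" "A \<in> sets M"
    and f_sq: "(\<integral>\<^sup>+x. ennreal (indicator A x * (f x)\<^sup>2) \<partial>M) \<le> ennreal C" and "0 \<le> C"
    and w_sq: "set_integrable M A (\<lambda>x. (w x)\<^sup>2)"
  shows "set_integrable M A (\<lambda>x. f x * w x)
    \<and> \<bar>LINT x:A|M. f x * w x\<bar> \<le> sqrt C * sqrt (LINT x:A|M. (w x)\<^sup>2)"
proof -
  define F where "F = (\<lambda>x. indicator A x * f x)"
  define W where "W = (\<lambda>x. indicator A x * w x)"
  have [measurable]: "F \<in> borel_measurable M" "W \<in> borel_measurable M"
    using assms(2) unfolding F_def W_def set_borel_measurable_def by simp_all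
  have "(F x)\<^sup>2 = indicator A x * (f x)\<^sup>2" "(W x)\<^sup>2 = indicator A x * (w x)\<^sup>2"
    "F x * W x = indicator A x * (f x * w x)" for x
    by (simp_all add: F_def W_def indicator_def)
  with integrable_mult_abs_integral_le_sqrt[of F M W C] f_sq \<open>0 \<le> C\<close> w_sq show ?thesis
    by (simp add: set_integrable_def set_lebesgue_integral_def)
qed

lemma sin_add_diff_ne_zero:
  assumes "0 < s" "s < pi/2" "0 \<le> \<sigma>" "\<sigma> \<le> pi/2" "s \<noteq> \<sigma>"
  shows "sin (s + \<sigma>) \<noteq> 0" "sin (s - \<sigma>) \<noteq> 0"
proof -
  show "sin (s + \<sigma>) \<noteq> 0" using sin_gt_zero[of "s + \<sigma>"] assms by auto
  show "sin (s - \<sigma>) \<noteq> 0"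
  proof (cases "\<sigma> < s")
    case True then show ?thesis using sin_gt_zero[of "s - \<sigma>"] assms by auto
  next
    case False
    then have "0 < sin (\<sigma> - s)" using sin_gt_zero[of "\<sigma> - s"] assms by auto
    then show ?thesis using sin_minus[of "\<sigma> - s"] by simp
  qed
qed

lemma K_diff_square_bound:
  assumes st: "\<sigma> \<in> {0..pi/2}" "t \<in> {0..pi/2}"
  shows "(\<integral>\<^sup>+s. ennreal (indicator {0..pi/2} s * (K s \<sigma> - K s t)\<^sup>2) \<partial>lborel) \<le> ennreal (pi\<^sup>2 * \<bar>\<sigma> - t\<bar>)"
proof (rule nn_integral_indicator_square_le_of_tendsto)
  define r where "r k = real k / real (Suc k)" for k
  have r: "0 \<le> r k" "r k < 1" for k by (simp_all add: r_def)
  show "(\<lambda>s. K_abel (r k) s \<sigma> - K_abel (r k) s t) \<in> borel_measurable lborel" for k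
    unfolding K_abel_def by measurable
  show "(\<integral>\<^sup>+s. ennreal (indicator {0..pi/2} s * (K_abel (r k) s \<sigma> - K_abel (r k) s t)\<^sup>2) \<partial>lborel)
      \<le> ennreal (pi\<^sup>2 * \<bar>\<sigma> - t\<bar>)" for k
    using K_abel_diff_square_bound[OF r st] .
  have "AE s in lborel. s \<notin> {0, pi/2, \<sigma>, t}"
    by (intro AE_not_in finite_imp_null_set_lborel) simp
  then show "AE s in lborel. s \<in> {0..pi/2} \<longrightarrow>
      (\<lambda>k. K_abel (r k) s \<sigma> - K_abel (r k) s t) \<longlonglongrightarrow> K s \<sigma> - K s t"
  proof eventually_elim
    case (elim s)
    have "r \<longlonglongrightarrow> 1" unfolding r_def by (rule LIMSEQ_n_over_Suc_n)
    with elim st sin_add_diff_ne_zero[of s \<sigma>] sin_add_diff_ne_zero[of s t]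
    show ?case by (auto intro!: tendsto_diff K_abel_tendsto_K)
  qed
qed simp

lemma K_0_right: "K s 0 = 0"
  by (simp add: K_def)

lemma K_pi_half_right: "K s (pi/2) = 0"
proof -
  have "sin (s + pi/2) = cos s" "sin (s - pi/2) = - cos s" by (simp_all add: sin_add sin_diff)
  then show ?thesis by (simp add: K_def abs_divide)
qed

lemma H_diff_bound:
  assumes w: "in_L2 w" and st: "\<sigma> \<in> {0..pi/2}" "t \<in> {0..pi/2}"
  shows "\<bar>H w \<sigma> - H w t\<bar> \<le> L2_norm w * \<bar>\<sigma> - t\<bar> powr (1/2)"
proof -
  let ?A = "{0..pi/2::real}"
  have wm: "set_borel_measurable lborel ?A w" and w_sq: "set_integrable lborel ?A (\<lambda>s. (w s)\<^sup>2)"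
    using w unfolding in_L2_def by auto
  have K_meas: "(\<lambda>s. K s x) \<in> borel_measurable lborel" for x
    unfolding K_def by measurable
  note CS = set_integrable_mult_abs_set_integral_le_sqrt[OF _ wm _ K_diff_square_bound _ w_sq]
  have "set_integrable lborel ?A (\<lambda>s. K s x * w s)" if "x \<in> ?A" for x
    using CS[OF _ _ that _, of 0] K_meas by (simp add: K_0_right)
  then have "(LINT s:?A|lborel. (K s \<sigma> - K s t) * w s) = pi * (H w \<sigma> - H w t)"
    using st unfolding H_def left_diff_distrib by (simp add: set_integral_diff field_simps)
  moreover have "\<bar>LINT s:?A|lborel. (K s \<sigma> - K s t) * w s\<bar>
      \<le> sqrt (pi\<^sup>2 * \<bar>\<sigma> - t\<bar>) * sqrt (LINT s:?A|lborel. (w s)\<^sup>2)"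
    using CS[OF _ _ st _] K_meas by simp
  ultimately have "pi * \<bar>H w \<sigma> - H w t\<bar> \<le> pi * (sqrt \<bar>\<sigma> - t\<bar> * L2_norm w)"
    by (simp add: abs_mult real_sqrt_mult L2_norm_def mult.assoc)
  then show ?thesis
    by (simp add: powr_half_sqrt mult.commute)
qed

theorem lemma3p3:
  fixes w u :: "real \<Rightarrow> real"
  assumes "in_L2 w"
    and "u = H w"
  shows "holder_on {0..pi/2} (1/2) u
    \<and> u 0 = 0 \<and> u (pi/2) = 0
    \<and> (\<forall>\<sigma>\<in>{0..pi/2}. \<forall>s\<in>{0..pi/2}. \<bar>u \<sigma> - u s\<bar> \<le> L2_norm w * \<bar>\<sigma> - s\<bar> powr (1/2))
    \<and> (\<forall>\<sigma>\<in>{0..pi/2}. \<bar>u \<sigma>\<bar> \<le> L2_norm w * \<sigma> powr (1/2))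
    \<and> (\<forall>\<sigma>\<in>{0..pi/2}. \<bar>u \<sigma>\<bar> \<le> L2_norm w * \<bar>pi/2 - \<sigma>\<bar> powr (1/2))"
proof -
  have bound: "\<forall>\<sigma>\<in>{0..pi/2}. \<forall>s\<in>{0..pi/2}. \<bar>u \<sigma> - u s\<bar> \<le> L2_norm w * \<bar>\<sigma> - s\<bar> powr (1/2)"
    using H_diff_bound[OF assms(1)] assms(2) by auto
  have u_0: "u 0 = 0" and u_pi_half: "u (pi/2) = 0"
    unfolding assms(2) H_def by (simp_all add: K_0_right K_pi_half_right)
  have "holder_on {0..pi/2} (1/2) u"
    unfolding holder_on_def using bound by blast
  moreover have "\<bar>u \<sigma>\<bar> \<le> L2_norm w * \<sigma> powr (1/2)" if "\<sigma> \<in> {0..pi/2}" for \<sigma>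
    using bound that u_0 by (metis abs_of_nonneg atLeastAtMost_iff diff_zero order_refl pi_half_ge_zero)
  moreover have "\<bar>u \<sigma>\<bar> \<le> L2_norm w * \<bar>pi/2 - \<sigma>\<bar> powr (1/2)" if "\<sigma> \<in> {0..pi/2}" for \<sigma>
    using bound that u_pi_half by (metis abs_minus_commute atLeastAtMost_iff diff_zero order_refl pi_half_ge_zero)
  ultimately show ?thesis using bound u_0 u_pi_half by blast
qed

end
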